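(* Every connected triangulated $2$-manifold (possibly with boundary) has a facet path.
   Context: A triangulated $2$-manifold is a finite collection of triangles (called facets), each with three distinct vertices, glued together along edges so that the resulting space is a $2$-manifold, possibly with boundary; it need not be a simplicial complex (two facets may share more than one edge). The (vertex-facet) incidence graph is the bipartite graph whose nodes are the facets and vertices, with an arc $(v,f)$ whenever $v$ is a vertex of $f$. A facet path is a trail $(v_0,f_1,v_1,f_2,\dots,f_k,v_k)$ in the incidence graph (consecutive nodes adjacent, no arc repeated) that contains every facet node exactly once; vertex nodes may repeat. *)

theory Defs
  imports Main
begin

text \<open>
Combinatorial model of a triangulated 2-manifold (possibly with boundary, not necessarily
a simplicial complex).  Each facet f has
three corners indexed 0,1,2, and vx f i is the vertex (of the resulting space) at corner i;
the three vertices of a facet are distinct.  Side i of a facet is the side opposite corner i,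
i.e. the side joining corners (i+1) mod 3 and (i+2) mod 3.  The gluing is a symmetric
relation G on sides (f,i): each side is glued to at most one other side, and glued sides
have the same pair of endpoint vertices (the identification of endpoints is then forced
by the labels).  The manifold conditions are: (edges) each side is glued to at most one
other side; (vertices) the link of every vertex is connected, i.e. all corners carrying the
same vertex label are connected through gluings of sides containing that corner (a
connected graph of maximum degree 2, hence a path or cycle: the vertex has a disk or
half-disk neighbourhood).  This last condition also guarantees that vertex labels are
exactly the classes of corners identified by the gluing.
\<close>

definition side_corners :: "nat \<Rightarrow> nat set" where
  "side_corners i = {(i + 1) mod 3, (i + 2) mod 3}"

definition facet_vertices :: "('f \<Rightarrow> nat \<Rightarrow> 'v) \<Rightarrow> 'f \<Rightarrow> 'v set" where
  "facet_vertices vx f = vx f ` {0, 1, 2}"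

definition corner_adj ::
  "('f \<Rightarrow> nat \<Rightarrow> 'v) \<Rightarrow> ('f \<times> nat \<Rightarrow> 'f \<times> nat \<Rightarrow> bool) \<Rightarrow> 'f \<times> nat \<Rightarrow> 'f \<times> nat \<Rightarrow> bool" where
  "corner_adj vx G c d \<longleftrightarrow>
     vx (fst c) (snd c) = vx (fst d) (snd d) \<and>
     (\<exists>a b. G (fst c, a) (fst d, b) \<and> snd c \<in> side_corners a \<and> snd d \<in> side_corners b)"

definition tri_manifold ::
  "'f set \<Rightarrow> ('f \<Rightarrow> nat \<Rightarrow> 'v) \<Rightarrow> ('f \<times> nat \<Rightarrow> 'f \<times> nat \<Rightarrow> bool) \<Rightarrow> bool" where
  "tri_manifold F vx G \<longleftrightarrow>
     finite F \<and>
     (\<forall>f\<in>F. inj_on (vx f) {0, 1, 2}) \<and>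
     (\<forall>s t. G s t \<longrightarrow> fst s \<in> F \<and> fst t \<in> F \<and> snd s < 3 \<and> snd t < 3) \<and>
     (\<forall>s t. G s t \<longrightarrow> G t s) \<and>
     (\<forall>s. \<not> G s s) \<and>
     (\<forall>s t u. G s t \<longrightarrow> G s u \<longrightarrow> t = u) \<and>
     (\<forall>f i g j. G (f, i) (g, j) \<longrightarrow> vx f ` side_corners i = vx g ` side_corners j) \<and>
     (\<forall>f\<in>F. \<forall>g\<in>F. \<forall>i<3. \<forall>j<3. vx f i = vx g j \<longrightarrow>
        (corner_adj vx G)\<^sup>*\<^sup>* (f, i) (g, j))"

definition connected_tri_manifold ::
  "'f set \<Rightarrow> ('f \<Rightarrow> nat \<Rightarrow> 'v) \<Rightarrow> ('f \<times> nat \<Rightarrow> 'f \<times> nat \<Rightarrow> bool) \<Rightarrow> bool" where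
  "connected_tri_manifold F vx G \<longleftrightarrow>
     tri_manifold F vx G \<and> F \<noteq> {} \<and>
     (\<forall>f\<in>F. \<forall>g\<in>F. (\<lambda>f' g'. \<exists>i j. G (f', i) (g', j))\<^sup>*\<^sup>* f g)"

text \<open>A facet path (v_0, f_1, v_1, ..., f_k, v_k): vs = [v_0,...,v_k], fs = [f_1,...,f_k].
It is a trail in the vertex-facet incidence graph (consecutive nodes adjacent, no arc
repeated; an arc is a pair (vertex, facet)) containing every facet node exactly once.\<close>
definition trail_arcs :: "'v list \<Rightarrow> 'f list \<Rightarrow> ('v \<times> 'f) list" where
  "trail_arcs vs fs = concat (map (\<lambda>i. [(vs ! i, fs ! i), (vs ! Suc i, fs ! i)]) [0..<length fs])"

definition facet_path ::
  "'f set \<Rightarrow> ('f \<Rightarrow> nat \<Rightarrow> 'v) \<Rightarrow> 'v list \<Rightarrow> 'f list \<Rightarrow> bool" where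
  "facet_path F vx vs fs \<longleftrightarrow>
     length vs = Suc (length fs) \<and>
     (\<forall>i<length fs. fs ! i \<in> F \<and> vs ! i \<in> facet_vertices vx (fs ! i)
                    \<and> vs ! Suc i \<in> facet_vertices vx (fs ! i)) \<and>
     distinct (trail_arcs vs fs) \<and>
     distinct fs \<and> set fs = F"

end

theory Submission
  imports Defs "HOL-Library.Disjoint_Sets"
begin

text \<open>
  Root the dual graph at a facet g.  The other facets fall into the branches hanging off the
  three sides of g, and by induction on the number of facets each branch hanging off a side with
  ends u, w has a weak cover: a walk through each of its facets exactly once, with distinct
  consecutive vertices, either from u to w, or two such closed walks, one at u and one at w.
  Weak covers of the branches on the sides {a, c} and {c, b} of a triangle g combine, by
  traversing g between two of its vertices, into a weak cover with ends a and b.  At the root,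
  the branch on side 0 and the rest are weak covers with the same ends, so they join to one walk,
  and such a walk repeats no arc of the incidence graph.
\<close>

text \<open>Consecutive vertices must differ: this is what keeps the two arcs at each facet of the
  walk distinct.\<close>
fun incidence_walk :: "('f \<Rightarrow> nat \<Rightarrow> 'v) \<Rightarrow> 'v list \<Rightarrow> 'f list \<Rightarrow> bool" where
  "incidence_walk vx [v] [] = True"
| "incidence_walk vx (v # w # vs) (f # fs) \<longleftrightarrow>
     v \<in> facet_vertices vx f \<and> w \<in> facet_vertices vx f \<and> v \<noteq> w \<and> incidence_walk vx (w # vs) fs"
| "incidence_walk vx _ _ = False"

lemma incidence_walk_Nil: "incidence_walk vx vs fs \<Longrightarrow> vs \<noteq> []"
  by (cases "(vx, vs, fs)" rule: incidence_walk.cases) auto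

lemma incidence_walk_length: "incidence_walk vx vs fs \<Longrightarrow> length vs = Suc (length fs)"
  by (induction vx vs fs rule: incidence_walk.induct) auto

lemma incidence_walk_nth:
  "incidence_walk vx vs fs \<Longrightarrow> i < length fs \<Longrightarrow>
     vs ! i \<in> facet_vertices vx (fs ! i) \<and> vs ! Suc i \<in> facet_vertices vx (fs ! i)"
  by (induction vx vs fs arbitrary: i rule: incidence_walk.induct)
    (auto simp: nth_Cons split: nat.split)

lemma incidence_walk_append:
  "incidence_walk vx vs fs \<Longrightarrow> incidence_walk vx ws gs \<Longrightarrow> last vs = hd ws \<Longrightarrow>
     incidence_walk vx (vs @ tl ws) (fs @ gs)"
proof (induction vx vs fs rule: incidence_walk.induct)
  case (1 vx v)
  then show ?case by (cases ws) (auto dest: incidence_walk_Nil)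
qed auto

lemma incidence_walk_rev: "incidence_walk vx vs fs \<Longrightarrow> incidence_walk vx (rev vs) (rev fs)"
proof (induction vx vs fs rule: incidence_walk.induct)
  case (2 vx v w vs f fs)
  then have "incidence_walk vx (rev (w # vs) @ tl [w, v]) (rev fs @ [f])"
    by (intro incidence_walk_append) auto
  then show ?case by simp
qed auto

lemma trail_arcs_Cons:
  "trail_arcs (v # w # vs) (f # fs) = (v, f) # (w, f) # trail_arcs (w # vs) fs"
  by (simp add: trail_arcs_def upt_conv_Cons map_Suc_upt[symmetric] o_def del: upt_Suc)

lemma incidence_walk_distinct_trail_arcs:
  "incidence_walk vx vs fs \<Longrightarrow> distinct fs \<Longrightarrow>
     distinct (trail_arcs vs fs) \<and> snd ` set (trail_arcs vs fs) \<subseteq> set fs"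
proof (induction vx vs fs rule: incidence_walk.induct)
  case (2 vx v w vs f fs)
  then show ?case by (auto simp: trail_arcs_Cons)
qed (auto simp: trail_arcs_def)

lemma incidence_walk_facet_path:
  assumes "incidence_walk vx vs fs" "distinct fs" "set fs = F"
  shows "facet_path F vx vs fs"
  using assms incidence_walk_length incidence_walk_nth incidence_walk_distinct_trail_arcs nth_mem
  unfolding facet_path_def by metis

definition walk_cover :: "('f \<Rightarrow> nat \<Rightarrow> 'v) \<Rightarrow> 'f set \<Rightarrow> 'v \<Rightarrow> 'v \<Rightarrow> bool" where
  "walk_cover vx X u w \<longleftrightarrow>
     (\<exists>vs fs. incidence_walk vx vs fs \<and> distinct fs \<and> set fs = X \<and> hd vs = u \<and> last vs = w)"

lemma walk_cover_empty: "walk_cover vx {} u u"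
  unfolding walk_cover_def by (intro exI[of _ "[u]"] exI[of _ "[]"]) simp

lemma walk_cover_singleton:
  "u \<in> facet_vertices vx f \<Longrightarrow> w \<in> facet_vertices vx f \<Longrightarrow> u \<noteq> w \<Longrightarrow> walk_cover vx {f} u w"
  unfolding walk_cover_def by (intro exI[of _ "[u, w]"] exI[of _ "[f]"]) simp

lemma walk_cover_commute: "walk_cover vx X u w \<Longrightarrow> walk_cover vx X w u"
  unfolding walk_cover_def
  by (metis incidence_walk_rev incidence_walk_Nil distinct_rev set_rev hd_rev last_rev)

lemma walk_cover_append:
  assumes "walk_cover vx X u w" "walk_cover vx Y w z" "X \<inter> Y = {}"
  shows "walk_cover vx (X \<union> Y) u z"
proof -
  obtain vs fs ws gs where
    walks: "incidence_walk vx vs fs" "incidence_walk vx ws gs" and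
    facets: "distinct fs" "set fs = X" "distinct gs" "set gs = Y" and
    ends: "hd vs = u" "last vs = w" "hd ws = w" "last ws = z"
    using assms(1,2) unfolding walk_cover_def by blast
  have "vs \<noteq> []" "ws \<noteq> []" using walks incidence_walk_Nil by blast+
  then have "hd (vs @ tl ws) = u" "last (vs @ tl ws) = z"
    using ends by (cases ws; auto)+
  moreover have "incidence_walk vx (vs @ tl ws) (fs @ gs)"
    using walks ends incidence_walk_append by metis
  ultimately show ?thesis
    using facets assms(3) unfolding walk_cover_def by (metis distinct_append set_append)
qed

text \<open>A walk between the two given vertices does not always exist: if the two branches below a
  triangle with vertices a, b, c are covered by walks from a to c and from c to b, the triangle can
  only close the combined walk up at a.  Closed walks at both ends serve equally well.\<close>
definition weak_cover :: "('f \<Rightarrow> nat \<Rightarrow> 'v) \<Rightarrow> 'f set \<Rightarrow> 'v set \<Rightarrow> bool" where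
  "weak_cover vx X E \<longleftrightarrow>
     (\<exists>u w. E = {u, w} \<and> (walk_cover vx X u w \<or> walk_cover vx X u u \<and> walk_cover vx X w w))"

lemma weak_cover_doubleton:
  "weak_cover vx X {u, w} \<longleftrightarrow> walk_cover vx X u w \<or> walk_cover vx X u u \<and> walk_cover vx X w w"
  unfolding weak_cover_def by (metis doubleton_eq_iff walk_cover_commute)

lemma weak_cover_empty: "weak_cover vx {} {u, w}"
  unfolding weak_cover_doubleton using walk_cover_empty by fast

lemma walk_cover_append3:
  assumes "walk_cover vx X u v" "walk_cover vx Y v w" "walk_cover vx Z w z"
    and "X \<inter> Y = {}" "X \<inter> Z = {}" "Y \<inter> Z = {}"
  shows "walk_cover vx (X \<union> Y \<union> Z) u z"
  using assms walk_cover_append by (metis Int_Un_distrib2 sup_bot_left)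

lemma weak_cover_insert_triangle:
  assumes vertices: "a \<in> facet_vertices vx g" "b \<in> facet_vertices vx g" "c \<in> facet_vertices vx g"
    and distinct: "a \<noteq> b" "a \<noteq> c" "b \<noteq> c"
    and covers: "weak_cover vx A {a, c}" "weak_cover vx B {c, b}"
    and disjoint: "g \<notin> A" "g \<notin> B" "A \<inter> B = {}"
  shows "weak_cover vx (insert g (A \<union> B)) {a, b}"
proof -
  have ab: "walk_cover vx {g} a b" and ac: "walk_cover vx {g} a c" and cb: "walk_cover vx {g} c b"
    using vertices distinct walk_cover_singleton by metis+
  have X: "insert g (A \<union> B) = {g} \<union> B \<union> A" "insert g (A \<union> B) = {g} \<union> A \<union> B"
    "insert g (A \<union> B) = A \<union> B \<union> {g}" "insert g (A \<union> B) = A \<union> {g} \<union> B"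
    by auto
  have d: "{g} \<inter> A = {}" "{g} \<inter> B = {}" "A \<inter> {g} = {}" "B \<inter> {g} = {}" "B \<inter> A = {}"
    using disjoint by auto
  consider "walk_cover vx A a c" "walk_cover vx B c b" | "walk_cover vx A a c" "walk_cover vx B c c"
    | "walk_cover vx A a a" "walk_cover vx B c b" | "walk_cover vx A a a" "walk_cover vx B b b"
    using covers unfolding weak_cover_doubleton by (metis walk_cover_commute)
  then show ?thesis
  proof cases
    case 1
    have "walk_cover vx (insert g (A \<union> B)) a a"
      unfolding X(1) using walk_cover_append3 1 ab d disjoint walk_cover_commute by metis
    moreover have "walk_cover vx (insert g (A \<union> B)) b b"
      unfolding X(2) using walk_cover_append3 1 ab d disjoint walk_cover_commute by metis
    ultimately show ?thesis unfolding weak_cover_doubleton by blast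
  next
    case 2
    have "walk_cover vx (insert g (A \<union> B)) a b"
      unfolding X(3) using walk_cover_append3 2 cb d disjoint by metis
    then show ?thesis unfolding weak_cover_doubleton by blast
  next
    case 3
    have "walk_cover vx (insert g (A \<union> B)) a b"
      unfolding X(4) using walk_cover_append3 3 ac d disjoint by metis
    then show ?thesis unfolding weak_cover_doubleton by blast
  next
    case 4
    have "walk_cover vx (insert g (A \<union> B)) a b"
      unfolding X(4) using walk_cover_append3 4 ab d disjoint by metis
    then show ?thesis unfolding weak_cover_doubleton by blast
  qed
qed

lemma weak_cover_union_walk_cover:
  assumes "weak_cover vx A E" "weak_cover vx B E" "A \<inter> B = {}"
  shows "\<exists>u w. walk_cover vx (A \<union> B) u w"
  using assms unfolding weak_cover_def
  by (metis doubleton_eq_iff walk_cover_append walk_cover_commute Int_commute Un_commute)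

lemma side_corners_rotate:
  assumes "i < 3"
  shows "side_corners ((i + 1) mod 3) = {(i + 2) mod 3, i}"
    and "side_corners ((i + 2) mod 3) = {i, (i + 1) mod 3}"
  using assms unfolding side_corners_def by (auto simp: mod_Suc)

lemma weak_cover_insert_facet:
  assumes inj: "inj_on (vx g) {0, 1, 2}" and i: "i < 3"
    and covers: "weak_cover vx A (vx g ` side_corners ((i + 2) mod 3))"
      "weak_cover vx B (vx g ` side_corners ((i + 1) mod 3))"
    and disjoint: "g \<notin> A" "g \<notin> B" "A \<inter> B = {}"
  shows "weak_cover vx (insert g (A \<union> B)) (vx g ` side_corners i)"
proof -
  have corners: "i \<in> {0, 1, 2}" "(i + 1) mod 3 \<in> {0, 1, 2}" "(i + 2) mod 3 \<in> {0, 1, 2}"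
    "i \<noteq> (i + 1) mod 3" "i \<noteq> (i + 2) mod 3" "(i + 1) mod 3 \<noteq> (i + 2) mod 3"
    using i by (auto simp: mod_Suc)
  then have distinct: "vx g ((i + 1) mod 3) \<noteq> vx g ((i + 2) mod 3)"
    "vx g ((i + 1) mod 3) \<noteq> vx g i" "vx g ((i + 2) mod 3) \<noteq> vx g i"
    using inj by (metis inj_on_contraD)+
  have vertices: "vx g j \<in> facet_vertices vx g" if "j \<in> {0, 1, 2}" for j
    using that unfolding facet_vertices_def by blast
  have "weak_cover vx A {vx g ((i + 1) mod 3), vx g i}"
    "weak_cover vx B {vx g i, vx g ((i + 2) mod 3)}"
    using covers side_corners_rotate[OF i] by (simp_all add: insert_commute)
  from weak_cover_insert_triangle[OF vertices vertices vertices distinct this disjoint]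
  show ?thesis using corners by (simp add: side_corners_def)
qed

definition dual_adj :: "('f \<times> nat \<Rightarrow> 'f \<times> nat \<Rightarrow> bool) \<Rightarrow> 'f set \<Rightarrow> 'f \<Rightarrow> 'f \<Rightarrow> bool" where
  "dual_adj G X f h \<longleftrightarrow> f \<in> X \<and> h \<in> X \<and> (\<exists>i j. G (f, i) (h, j))"

definition dual_connected_from :: "('f \<times> nat \<Rightarrow> 'f \<times> nat \<Rightarrow> bool) \<Rightarrow> 'f set \<Rightarrow> 'f \<Rightarrow> bool" where
  "dual_connected_from G X g \<longleftrightarrow> g \<in> X \<and> (\<forall>h\<in>X. (dual_adj G X)\<^sup>*\<^sup>* g h)"

definition branch :: "('f \<times> nat \<Rightarrow> 'f \<times> nat \<Rightarrow> bool) \<Rightarrow> 'f set \<Rightarrow> 'f \<Rightarrow> nat \<Rightarrow> 'f set" where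
  "branch G X g s =
     {h. \<exists>t. G (g, s) t \<and> fst t \<in> X - {g} \<and> (dual_adj G (X - {g}))\<^sup>*\<^sup>* (fst t) h}"

lemma dual_adj_rtranclp_mem: "(dual_adj G X)\<^sup>*\<^sup>* f h \<Longrightarrow> f \<in> X \<Longrightarrow> h \<in> X"
  by (induction rule: rtranclp_induct) (auto simp: dual_adj_def)

lemma symp_dual_adj: "symp G \<Longrightarrow> symp (dual_adj G X)"
  unfolding symp_def dual_adj_def by blast

lemma dual_connected_from_component:
  assumes "g \<in> Y"
  shows "dual_connected_from G {h. (dual_adj G Y)\<^sup>*\<^sup>* g h} g"
proof -
  let ?C = "{h. (dual_adj G Y)\<^sup>*\<^sup>* g h}"
  have "(dual_adj G ?C)\<^sup>*\<^sup>* g h" if "(dual_adj G Y)\<^sup>*\<^sup>* g h" for h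
    using that
  proof (induction rule: rtranclp_induct)
    case (step y z)
    then have "z \<in> ?C" by simp
    with step have "dual_adj G ?C y z" by (simp add: dual_adj_def)
    with step.IH show ?case by simp
  qed simp
  then show ?thesis unfolding dual_connected_from_def by simp
qed

lemma branch_subset: "branch G X g s \<subseteq> X - {g}"
  unfolding branch_def by (auto dest: dual_adj_rtranclp_mem)

lemma branch_eq_component:
  assumes "right_unique G" "G (g, s) t" "fst t \<in> X - {g}"
  shows "branch G X g s = {h. (dual_adj G (X - {g}))\<^sup>*\<^sup>* (fst t) h}"
proof -
  have "t' = t" if "G (g, s) t'" for t'
    using right_uniqueD[OF assms(1) that assms(2)] .
  then show ?thesis using assms(2,3) unfolding branch_def by blast
qed

lemma branch_dual_connected:
  assumes "right_unique G" "branch G X g s \<noteq> {}"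
  obtains h s' where "G (g, s) (h, s')" "dual_connected_from G (branch G X g s) h"
proof -
  obtain t where t: "G (g, s) t" "fst t \<in> X - {g}"
    using assms(2) unfolding branch_def by blast
  have "dual_connected_from G (branch G X g s) (fst t)"
    unfolding branch_eq_component[OF assms(1) t] using dual_connected_from_component[OF t(2)] .
  with t(1) show ?thesis using that by (cases t) simp
qed

lemma branches_eq_if_meet:
  assumes "symp G" "right_unique G" "h \<in> branch G X g s" "h \<in> branch G X g s'"
  shows "branch G X g s = branch G X g s'"
proof -
  let ?R = "dual_adj G (X - {g})"
  obtain t where t: "G (g, s) t" "fst t \<in> X - {g}" "?R\<^sup>*\<^sup>* (fst t) h"
    using assms(3) unfolding branch_def by blast
  obtain t' where t': "G (g, s') t'" "fst t' \<in> X - {g}" "?R\<^sup>*\<^sup>* (fst t') h"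
    using assms(4) unfolding branch_def by blast
  have eqv: "equivp ?R\<^sup>*\<^sup>*" using equivp_rtranclp[OF symp_dual_adj[OF assms(1)]] .
  have link: "?R\<^sup>*\<^sup>* (fst t) (fst t')"
    using equivp_transp[OF eqv t(3) equivp_symp[OF eqv t'(3)]] .
  have "?R\<^sup>*\<^sup>* (fst t) x \<longleftrightarrow> ?R\<^sup>*\<^sup>* (fst t') x" for x
    using equivp_transp[OF eqv link] equivp_transp[OF eqv equivp_symp[OF eqv link]] by blast
  then show ?thesis
    using branch_eq_component[OF assms(2) t(1,2)] branch_eq_component[OF assms(2) t'(1,2)] by simp
qed

text \<open>Two sides of g may be glued into the same branch; disjointing keeps that branch only at
  the first of these sides.\<close>
lemma disjointed_branch_cases:
  assumes "symp G" "right_unique G"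
  shows "disjointed (branch G X g) s = {} \<or> disjointed (branch G X g) s = branch G X g s"
proof (cases "branch G X g s \<inter> (\<Union>i\<in>{0..<s}. branch G X g i) = {}")
  case True
  then show ?thesis unfolding disjointed_def by blast
next
  case False
  then obtain i h where i: "i \<in> {0..<s}" and h: "h \<in> branch G X g s" "h \<in> branch G X g i"
    by blast
  have "branch G X g s \<subseteq> (\<Union>i\<in>{0..<s}. branch G X g i)"
    using branches_eq_if_meet[OF assms h] i by blast
  then show ?thesis unfolding disjointed_def by blast
qed

lemma branch_step:
  assumes "y \<in> branch G X g s" "dual_adj G X y z" "z \<noteq> g"
  shows "z \<in> branch G X g s"
proof -
  obtain t where t: "G (g, s) t" "fst t \<in> X - {g}" "(dual_adj G (X - {g}))\<^sup>*\<^sup>* (fst t) y"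
    using assms(1) unfolding branch_def by blast
  have "y \<in> X - {g}" using dual_adj_rtranclp_mem[OF t(3,2)] .
  then have "dual_adj G (X - {g}) y z"
    using assms(2,3) unfolding dual_adj_def by blast
  with t(3) have "(dual_adj G (X - {g}))\<^sup>*\<^sup>* (fst t) z"
    by (rule rtranclp.rtrancl_into_rtrancl)
  then show ?thesis unfolding branch_def using t(1,2) by blast
qed

lemma dual_connected_from_branches:
  assumes sides: "\<And>s t. G s t \<Longrightarrow> snd s < 3" and conn: "dual_connected_from G X g"
  shows "X = insert g (\<Union>s<3. branch G X g s)"
proof -
  have "h = g \<or> (\<exists>s<3. h \<in> branch G X g s)" if "(dual_adj G X)\<^sup>*\<^sup>* g h" for h
    using that
  proof (induction rule: rtranclp_induct)
    case (step y z)
    show ?case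
    proof (cases "z = g")
      case False
      from step.IH show ?thesis
      proof
        assume "y = g"
        obtain i j where glued: "G (g, i) (z, j)" and "z \<in> X"
          using step.hyps(2) \<open>y = g\<close> unfolding dual_adj_def by blast
        then have "z \<in> branch G X g i"
          unfolding branch_def using False by (intro CollectI exI[of _ "(z, j)"]) simp
        then show ?thesis using sides[OF glued] by auto
      next
        assume "\<exists>s<3. y \<in> branch G X g s"
        then obtain s where "s < 3" "y \<in> branch G X g s" by blast
        then show ?thesis using branch_step[OF _ step.hyps(2) False] by blast
      qed
    qed simp
  qed simp
  moreover have "branch G X g s \<subseteq> X" for s
    using branch_subset[of G X g s] by blast
  ultimately show ?thesis
    using conn unfolding dual_connected_from_def by blast
qed

lemma tri_manifoldD:
  assumes "tri_manifold F vx G"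
  shows "finite F"
    and "f \<in> F \<Longrightarrow> inj_on (vx f) {0, 1, 2}"
    and "G s t \<Longrightarrow> fst s \<in> F"
    and "G s t \<Longrightarrow> snd s < 3"
    and "symp G"
    and "right_unique G"
    and "G (f, i) (g, j) \<Longrightarrow> vx f ` side_corners i = vx g ` side_corners j"
proof -
  have fin: "finite F" and inj: "\<forall>f\<in>F. inj_on (vx f) {0, 1, 2}"
    and glue: "\<forall>s t. G s t \<longrightarrow> fst s \<in> F \<and> fst t \<in> F \<and> snd s < 3 \<and> snd t < 3"
    and sym: "\<forall>s t. G s t \<longrightarrow> G t s" and uniq: "\<forall>s t u. G s t \<longrightarrow> G s u \<longrightarrow> t = u"
    and lab: "\<forall>f i g j. G (f, i) (g, j) \<longrightarrow> vx f ` side_corners i = vx g ` side_corners j"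
    using assms by (simp_all add: tri_manifold_def)
  show "finite F" by (fact fin)
  show "inj_on (vx f) {0, 1, 2}" if "f \<in> F" using inj that by blast
  show "fst s \<in> F" "snd s < 3" if "G s t" using glue that by blast+
  show "symp G" using sym by (blast intro: sympI)
  show "right_unique G" using uniq by (blast intro: right_uniqueI)
  show "vx f ` side_corners i = vx g ` side_corners j" if "G (f, i) (g, j)" using lab that by blast
qed

lemma connected_tri_manifold_dual_connected_from:
  assumes "connected_tri_manifold F vx G" "r \<in> F"
  shows "dual_connected_from G F r"
proof -
  have tm: "tri_manifold F vx G"
    and conn: "\<forall>f\<in>F. \<forall>g\<in>F. (\<lambda>f' g'. \<exists>i j. G (f', i) (g', j))\<^sup>*\<^sup>* f g"
    using assms(1) unfolding connected_tri_manifold_def by blast+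
  have "dual_adj G F f h" if "G (f, i) (h, j)" for f h i j
    using that tri_manifoldD(3)[OF tm] tri_manifoldD(5)[OF tm] unfolding dual_adj_def symp_def
    by (metis fst_conv)
  then have "(dual_adj G F)\<^sup>*\<^sup>* r h" if "h \<in> F" for h
    using conn assms(2) that mono_rtranclp[of "\<lambda>f' g'. \<exists>i j. G (f', i) (g', j)" "dual_adj G F"]
    by blast
  then show ?thesis unfolding dual_connected_from_def using assms(2) by blast
qed

lemma disjointed_branch_partition:
  assumes "\<And>s t. G s t \<Longrightarrow> snd s < 3" "dual_connected_from G X g" "i < 3"
  shows "X = insert g (disjointed (branch G X g) i \<union> disjointed (branch G X g) ((i + 1) mod 3)
                       \<union> disjointed (branch G X g) ((i + 2) mod 3))"
proof -
  have "X = insert g (\<Union>s<3. branch G X g s)"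
    using assms(1,2) by (rule dual_connected_from_branches)
  moreover have "{..<3} = {i, (i + 1) mod 3, (i + 2) mod 3}"
    using assms(3) by (auto simp: mod_Suc)
  ultimately show ?thesis
    using finite_UN_disjointed_eq[of "branch G X g" 3] by (simp add: atLeast0LessThan Un_assoc)
qed

lemma weak_cover_from_branches:
  assumes tm: "tri_manifold F vx G" and g: "g \<in> F" and conn: "dual_connected_from G X g"
    and i: "i < 3"
    and covers:
      "weak_cover vx (disjointed (branch G X g) ((i + 2) mod 3))
         (vx g ` side_corners ((i + 2) mod 3))"
      "weak_cover vx (disjointed (branch G X g) ((i + 1) mod 3))
         (vx g ` side_corners ((i + 1) mod 3))"
  shows "weak_cover vx (X - disjointed (branch G X g) i) (vx g ` side_corners i)"
proof -
  let ?K = "disjointed (branch G X g)"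
  have root: "g \<notin> ?K j" for j
    using disjointed_subset[of "branch G X g" j] branch_subset[of G X g j] by blast
  have "i \<noteq> (i + 1) mod 3" "i \<noteq> (i + 2) mod 3" "(i + 2) mod 3 \<noteq> (i + 1) mod 3"
    using i by (auto simp: mod_Suc)
  then have disjoint: "?K i \<inter> ?K ((i + 1) mod 3) = {}" "?K i \<inter> ?K ((i + 2) mod 3) = {}"
    "?K ((i + 2) mod 3) \<inter> ?K ((i + 1) mod 3) = {}"
    by (simp_all add: disjoint_family_onD[OF disjoint_family_disjointed UNIV_I UNIV_I])
  moreover have "X = insert g (?K i \<union> ?K ((i + 1) mod 3) \<union> ?K ((i + 2) mod 3))"
    using tri_manifoldD(4)[OF tm] conn i by (rule disjointed_branch_partition)
  ultimately have "X - ?K i = insert g (?K ((i + 2) mod 3) \<union> ?K ((i + 1) mod 3))"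
    using root[of i] by blast
  then show ?thesis
    using weak_cover_insert_facet[OF tri_manifoldD(2)[OF tm g] i covers root root disjoint(3)]
    by simp
qed

lemma disjointed_branch_weak_cover:
  assumes tm: "tri_manifold F vx G"
  shows "X \<subseteq> F \<Longrightarrow> dual_connected_from G X g \<Longrightarrow> s < 3 \<Longrightarrow>
    weak_cover vx (disjointed (branch G X g) s) (vx g ` side_corners s)"
proof (induction "card X" arbitrary: X g s rule: less_induct)
  case less
  let ?K = "disjointed (branch G X g) s"
  have sym: "symp G" and uniq: "right_unique G"
    using tri_manifoldD[OF tm] by blast+
  consider "?K = {}" | "?K = branch G X g s" "branch G X g s \<noteq> {}"
    using disjointed_branch_cases[OF sym uniq] by metis
  then show ?case
  proof cases
    case 1
    then show ?thesis by (simp add: side_corners_def weak_cover_empty)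
  next
    case 2
    obtain h s' where glued: "G (g, s) (h, s')" and conn: "dual_connected_from G ?K h"
      using branch_dual_connected[OF uniq 2(2)] 2(1) by metis
    have "?K \<subseteq> X - {g}" "g \<in> X"
      using 2(1) branch_subset[of G X g s] less.prems(2) unfolding dual_connected_from_def by auto
    then have KF: "?K \<subseteq> F" and card: "card ?K < card X"
      using less.prems(1) finite_subset[OF less.prems(1) tri_manifoldD(1)[OF tm]]
      by (auto intro: psubset_card_mono)
    have h: "h \<in> F" using conn KF unfolding dual_connected_from_def by blast
    have reverse: "G (h, s') (g, s)" using glued sym by (blast dest: sympD)
    have side: "s' < 3" using tri_manifoldD(4)[OF tm reverse] by simp
    have IH: "weak_cover vx (disjointed (branch G ?K h) j) (vx h ` side_corners j)" if "j < 3" for j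
      using less.hyps[OF card KF conn that] .
    have "branch G ?K h s' = {}"
      using right_uniqueD[OF uniq reverse] \<open>?K \<subseteq> X - {g}\<close> unfolding branch_def by auto
    then have "disjointed (branch G ?K h) s' = {}"
      using disjointed_subset[of "branch G ?K h" s'] by blast
    then have "weak_cover vx ?K (vx h ` side_corners s')"
      using weak_cover_from_branches[OF tm h conn side IH IH] by simp
    then show ?thesis using tri_manifoldD(7)[OF tm glued] by simp
  qed
qed

lemma dual_connected_walk_cover:
  assumes tm: "tri_manifold F vx G" and r: "r \<in> F" and conn: "dual_connected_from G F r"
  shows "\<exists>u w. walk_cover vx F u w"
proof -
  let ?K = "disjointed (branch G F r)"
  have covers: "weak_cover vx (?K j) (vx r ` side_corners j)" if "j < 3" for j
    using disjointed_branch_weak_cover[OF tm subset_refl conn that] .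
  have "weak_cover vx (F - ?K 0) (vx r ` side_corners 0)"
    using weak_cover_from_branches[OF tm r conn, of 0] covers[of 1] covers[of 2]
    by (simp add: numeral_2_eq_2)
  moreover have "weak_cover vx (?K 0) (vx r ` side_corners 0)"
    using covers[of 0] by simp
  moreover have "(F - ?K 0) \<inter> ?K 0 = {}" by blast
  ultimately obtain u w where "walk_cover vx (F - ?K 0 \<union> ?K 0) u w"
    by (blast dest: weak_cover_union_walk_cover)
  moreover have "F - ?K 0 \<union> ?K 0 = F"
    using disjointed_subset[of "branch G F r" 0] branch_subset[of G F r 0] by blast
  ultimately show ?thesis by auto
qed

theorem theorem4:
  fixes F :: "'f set" and vx :: "'f \<Rightarrow> nat \<Rightarrow> 'v"
    and G :: "'f \<times> nat \<Rightarrow> 'f \<times> nat \<Rightarrow> bool"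
  assumes "connected_tri_manifold F vx G"
  shows "\<exists>vs fs. facet_path F vx vs fs"
proof -
  have tm: "tri_manifold F vx G" and "F \<noteq> {}"
    using assms unfolding connected_tri_manifold_def by blast+
  then obtain r where r: "r \<in> F" by blast
  have "dual_connected_from G F r"
    using assms r by (rule connected_tri_manifold_dual_connected_from)
  then obtain u w where "walk_cover vx F u w"
    using dual_connected_walk_cover[OF tm r] by blast
  then show ?thesis
    unfolding walk_cover_def using incidence_walk_facet_path by blast
qed

end
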